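(* Suppose Assumption A1 holds and $\mathbf z^*$ is an optimal solution of the dual problem (D). For every $i\neq j$ in $\{1,\dots,N\}$ and every $\mathbf h_1,\mathbf h_2\in\mathbb R^N$, $C_i(\mathbf z^*+t\mathbf h_1)\cap C_j(\mathbf z^*+t\mathbf h_2)\subset D_{ij}(\mathbf h_1,\mathbf h_2,t)$ and $$R\big(D_{ij}(\mathbf h_1,\mathbf h_2,t)\setminus C_j(\mathbf z^*+t\mathbf h_2)\big)=O(t^2),\qquad t\downarrow0.$$
   Context: Setting: $R$ is a Borel probability measure on $\mathbb R^d$, $P$ has finite support $\{\mathbf x_1,\dots,\mathbf x_N\}$ (distinct) with weights $p_i>0$. Assumption A1: $R$ compactly supported, absolutely continuous with density $\rho$ continuous on a compact convex $\mathcal Y\supset\operatorname{supp}R$ ($\rho=0$ off $\mathcal Y$), $\mathcal Y$ polyhedral or $\mathcal H^{d-1}(\partial\mathcal Y\cap H)=0$ for every hyperplane $H$. Dual problem (D): maximize over $\mathbf z\in\mathbb R^N$ the function $\sum_ip_iz_i+\int\min_i(\tfrac12\|\mathbf y-\mathbf x_i\|^2-z_i)dR(\mathbf y)$. For $\mathbf z\in\mathbb R^N$: $b_{ij}(\mathbf z)=(\|\mathbf x_i\|^2-\|\mathbf x_j\|^2)/2-z_i+z_j$, $C_i(\mathbf z)=\bigcap_{k\neq i}\{\mathbf y:\langle\mathbf x_i-\mathbf x_k,\mathbf y\rangle\ge b_{ik}(\mathbf z)\}$; $b_{ij}=b_{ij}(\mathbf z^* )$. For $t>0$, $D_{ij}(\mathbf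 h_1,\mathbf h_2,t)=C_i(\mathbf z^*+t\mathbf h_1)\cap\{\mathbf y:\langle\mathbf x_i-\mathbf x_j,\mathbf y\rangle-b_{ij}\le t(h_{2,j}-h_{2,i})\}$. *)

theory Defs
  imports "HOL-Probability.Probability" "HOL-Library.Landau_Symbols"
begin

text \<open>The normalising constant is omitted; it does not affect null sets.
  A nonempty set E contributes diam(E)^s (so for s = 0 each nonempty piece counts 1),
  the empty set contributes 0.\<close>

definition hausdorff_content :: "nat \<Rightarrow> real \<Rightarrow> 'a::metric_space set \<Rightarrow> ennreal" where
  "hausdorff_content s \<delta> A =
     (INF E \<in> {E :: nat \<Rightarrow> 'a set. A \<subseteq> (\<Union>n. E n) \<and> (\<forall>n. diameter (E n) \<le> \<delta>)}.
        (\<Sum>n. (if E n = {} then 0 else ennreal (diameter (E n) ^ s))))"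

definition hausdorff_measure :: "nat \<Rightarrow> 'a::metric_space set \<Rightarrow> ennreal" where
  "hausdorff_measure s A = (SUP \<delta> \<in> {0<..}. hausdorff_content s \<delta> A)"

definition dual_obj :: "nat \<Rightarrow> (nat \<Rightarrow> 'a::euclidean_space) \<Rightarrow> (nat \<Rightarrow> real) \<Rightarrow> 'a measure
    \<Rightarrow> (nat \<Rightarrow> real) \<Rightarrow> real" where
  "dual_obj N x p R z =
     (\<Sum>i<N. p i * z i) + (\<integral>y. Min ((\<lambda>i. (norm (y - x i))\<^sup>2 / 2 - z i) ` {..<N}) \<partial>R)"

definition bij_coef :: "(nat \<Rightarrow> 'a::euclidean_space) \<Rightarrow> (nat \<Rightarrow> real) \<Rightarrow> nat \<Rightarrow> nat \<Rightarrow> real" where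
  "bij_coef x z i j = ((norm (x i))\<^sup>2 - (norm (x j))\<^sup>2) / 2 - z i + z j"

definition cell :: "nat \<Rightarrow> (nat \<Rightarrow> 'a::euclidean_space) \<Rightarrow> (nat \<Rightarrow> real) \<Rightarrow> nat \<Rightarrow> 'a set" where
  "cell N x z i = {y. \<forall>k<N. k \<noteq> i \<longrightarrow> (x i - x k) \<bullet> y \<ge> bij_coef x z i k}"

definition Dset :: "nat \<Rightarrow> (nat \<Rightarrow> 'a::euclidean_space) \<Rightarrow> (nat \<Rightarrow> real) \<Rightarrow> nat \<Rightarrow> nat
    \<Rightarrow> (nat \<Rightarrow> real) \<Rightarrow> (nat \<Rightarrow> real) \<Rightarrow> real \<Rightarrow> 'a set" where
  "Dset N x zs i j h1 h2 t =
     cell N x (\<lambda>k. zs k + t * h1 k) i \<inter>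
     {y. (x i - x j) \<bullet> y - bij_coef x zs i j \<le> t * (h2 j - h2 i)}"

end

theory Submission
  imports Defs
begin

(* A point of D_ij(h1, h2, t) outside C_j(z* + t h2) violates the constraint of C_j facing some
   x_k with k \<noteq> i, j, and then lies within O(t) of both hyperplanes (x_i - x_j) \<bullet> y = b_ij and
   (x_i - x_k) \<bullet> y = b_ik. If x_i - x_k is not parallel to x_i - x_j, the two slabs meet the
   compact support Y in a set of Lebesgue measure O(t^2), and the density is bounded on Y.
   If it is parallel, either the offsets are inconsistent and the slabs are disjoint for small t,
   or x_i, x_j, x_k are collinear with consistent offsets: then the cell of the middle point lies
   in a hyperplane and is R-null. The latter is impossible: optimality of z* forces
   p_m \<le> R(C_m) for every cell C_m of z*, and p_m > 0. *)

section \<open>Lebesgue measure of thin slab pairs\<close>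

definition slab_pair :: "'a::euclidean_space \<Rightarrow> real \<Rightarrow> 'a \<Rightarrow> real \<Rightarrow> real \<Rightarrow> 'a set" where
  "slab_pair a \<alpha> b \<beta> r = {y. \<bar>a \<bullet> y - \<alpha>\<bar> \<le> r \<and> \<bar>b \<bullet> y - \<beta>\<bar> \<le> r}"

lemma slab_pair_borel [measurable]: "slab_pair a \<alpha> b \<beta> r \<in> sets borel"
  unfolding slab_pair_def by measurable

lemma emeasure_lborel_abs_affine:
  fixes k c r :: real
  assumes "k \<noteq> 0" "0 \<le> r"
  shows "emeasure lborel {s. \<bar>s * k + c\<bar> \<le> r} = ennreal (2 * r / \<bar>k\<bar>)"
proof -
  have "\<bar>s * k + c\<bar> = \<bar>k\<bar> * \<bar>s - (- c / k)\<bar>" for s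
    using assms by (simp add: abs_mult[symmetric] algebra_simps)
  moreover have "\<bar>k\<bar> * \<bar>s - (- c / k)\<bar> \<le> r \<longleftrightarrow> \<bar>s - (- c / k)\<bar> \<le> r / \<bar>k\<bar>" for s
    using assms by (simp add: field_simps)
  ultimately have "{s. \<bar>s * k + c\<bar> \<le> r} = {- c / k - r / \<bar>k\<bar> .. - c / k + r / \<bar>k\<bar>}"
    by (auto simp: abs_le_iff)
  moreover have "- c / k - r / \<bar>k\<bar> \<le> - c / k + r / \<bar>k\<bar>"
    using assms by simp
  ultimately show ?thesis
    by simp
qed

lemma sum_fun_upd_remove:
  assumes "finite A" "c \<in> A"
  shows "(\<Sum>d\<in>A. (x(c := s)) d * w d) = s * w c + (\<Sum>d\<in>A - {c}. x d * w d)"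
  using assms by (simp add: sum.remove)

lemma emeasure_PiM_insert_strip_le:
  fixes g :: "('i \<Rightarrow> real) \<Rightarrow> real"
  assumes I: "finite I" "c \<notin> I" and k: "k \<noteq> 0" and r: "0 \<le> r"
    and S: "S \<in> sets (\<Pi>\<^sub>M i\<in>insert c I. lborel)" and T: "T \<in> sets (\<Pi>\<^sub>M i\<in>I. lborel)"
    and strip: "\<And>x s. x \<in> space (\<Pi>\<^sub>M i\<in>I. lborel) \<Longrightarrow> x(c := s) \<in> S \<Longrightarrow> x \<in> T \<and> \<bar>s * k + g x\<bar> \<le> r"
  shows "emeasure (\<Pi>\<^sub>M i\<in>insert c I. lborel) S \<le> ennreal (2 * r / \<bar>k\<bar>) * emeasure (\<Pi>\<^sub>M i\<in>I. lborel) T"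
proof -
  interpret product_sigma_finite "\<lambda>_::'i. lborel :: real measure"
    by (simp add: product_sigma_finite_def sigma_finite_lborel)
  have fibre: "(\<integral>\<^sup>+s. indicator S (x(c := s)) \<partial>lborel) \<le> ennreal (2 * r / \<bar>k\<bar>) * indicator T x"
    if x: "x \<in> space (\<Pi>\<^sub>M i\<in>I. lborel)" for x
  proof -
    have "(\<integral>\<^sup>+s. indicator S (x(c := s)) \<partial>lborel)
        \<le> (\<integral>\<^sup>+s. indicator T x * indicator {s. \<bar>s * k + g x\<bar> \<le> r} s \<partial>lborel)"
      using strip[OF x] by (intro nn_integral_mono) (auto simp: indicator_def)
    also have "\<dots> = indicator T x * emeasure lborel {s. \<bar>s * k + g x\<bar> \<le> r}"
      by (rule nn_integral_cmult_indicator) measurable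
    finally show ?thesis
      using k r by (simp add: emeasure_lborel_abs_affine mult.commute)
  qed
  have "emeasure (\<Pi>\<^sub>M i\<in>insert c I. lborel) S = (\<integral>\<^sup>+y. indicator S y \<partial>(\<Pi>\<^sub>M i\<in>insert c I. lborel))"
    using S by simp
  also have "\<dots> = (\<integral>\<^sup>+x. (\<integral>\<^sup>+s. indicator S (x(c := s)) \<partial>lborel) \<partial>(\<Pi>\<^sub>M i\<in>I. lborel))"
    using I S by (intro product_nn_integral_insert) auto
  also have "\<dots> \<le> (\<integral>\<^sup>+x. ennreal (2 * r / \<bar>k\<bar>) * indicator T x \<partial>(\<Pi>\<^sub>M i\<in>I. lborel))"
    by (rule nn_integral_mono) (rule fibre)
  also have "\<dots> = ennreal (2 * r / \<bar>k\<bar>) * emeasure (\<Pi>\<^sub>M i\<in>I. lborel) T"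
    using T by (rule nn_integral_cmult_indicator)
  finally show ?thesis .
qed

lemma emeasure_PiM_strip_box_le:
  fixes w :: "'i \<Rightarrow> real"
  assumes I: "finite I" "c \<notin> I" and w: "w c \<noteq> 0" and r: "0 \<le> r" and M: "0 \<le> M"
  shows "emeasure (\<Pi>\<^sub>M i\<in>insert c I. lborel) {x \<in> space (\<Pi>\<^sub>M i\<in>insert c I. lborel).
      \<bar>(\<Sum>d\<in>insert c I. x d * w d) - \<beta>\<bar> \<le> r \<and> (\<forall>d\<in>insert c I. \<bar>x d\<bar> \<le> M)}
    \<le> ennreal (2 * r / \<bar>w c\<bar>) * ennreal ((2 * M) ^ card I)"
    (is "emeasure _ ?S \<le> _")
proof -
  interpret product_sigma_finite "\<lambda>_::'i. lborel :: real measure"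
    by (simp add: product_sigma_finite_def sigma_finite_lborel)
  have "?S \<in> sets (\<Pi>\<^sub>M i\<in>insert c I. lborel)"
    using I(1) by measurable (auto simp: I(1) intro!: borel_measurable_le measurable_component_singleton)
  then have "emeasure (\<Pi>\<^sub>M i\<in>insert c I. lborel) ?S
    \<le> ennreal (2 * r / \<bar>w c\<bar>) * emeasure (\<Pi>\<^sub>M i\<in>I. lborel) (\<Pi>\<^sub>E d\<in>I. {-M..M})"
  proof (rule emeasure_PiM_insert_strip_le[of _ _ _ _ _ _ "\<lambda>x. (\<Sum>d\<in>I. x d * w d) - \<beta>", OF I w r])
    fix x s assume x: "x \<in> space (\<Pi>\<^sub>M i\<in>I. lborel)" and xs: "x(c := s) \<in> ?S"
    have "(\<Sum>d\<in>insert c I. (x(c := s)) d * w d) = s * w c + (\<Sum>d\<in>I. x d * w d)"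
      using I by (subst sum_fun_upd_remove) auto
    then show "x \<in> (\<Pi>\<^sub>E d\<in>I. {-M..M}) \<and> \<bar>s * w c + ((\<Sum>d\<in>I. x d * w d) - \<beta>)\<bar> \<le> r"
      using xs x I by (auto simp: space_PiM PiE_iff abs_le_iff add_diff_eq split: if_splits)
  qed (use I in auto)
  also have "emeasure (\<Pi>\<^sub>M i\<in>I. lborel) (\<Pi>\<^sub>E d\<in>I. {-M..M}) = ennreal ((2 * M) ^ card I)"
    using I M by (simp add: emeasure_PiM prod_ennreal ennreal_power)
  finally show ?thesis .
qed

(* Fubini over the coordinates b1 and b2: since b \<bullet> b1 = 0, every b1-fibre meets the first slab
   in an interval of length 2 r / |a \<bullet> b1|, and every b2-fibre of the remaining set meets the
   second slab in an interval of length 2 r / |b \<bullet> b2|. *)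
lemma emeasure_slab_pair_box_le:
  fixes a b :: "'a::euclidean_space"
  assumes b1: "b1 \<in> Basis" "a \<bullet> b1 \<noteq> 0" and b2: "b2 \<in> Basis" "b \<bullet> b1 = 0" "b \<bullet> b2 \<noteq> 0"
    and M: "0 \<le> M" and r: "0 \<le> r"
  shows "emeasure lborel (slab_pair a \<alpha> b \<beta> r \<inter> {y. \<forall>c\<in>Basis. \<bar>y \<bullet> c\<bar> \<le> M})
     \<le> ennreal (2 * r / \<bar>a \<bullet> b1\<bar>) * (ennreal (2 * r / \<bar>b \<bullet> b2\<bar>) * ennreal ((2 * M) ^ (DIM('a) - 2)))"
proof -
  define E :: "('a \<Rightarrow> real) \<Rightarrow> 'a" where "E f = (\<Sum>c\<in>Basis. f c *\<^sub>R c)" for f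
  define S where "S = slab_pair a \<alpha> b \<beta> r \<inter> {y. \<forall>c\<in>Basis. \<bar>y \<bullet> c\<bar> \<le> M}"
  define I where "I = Basis - {b1, b2}"
  have "b1 \<noteq> b2"
    using b2 by auto
  then have Basis: "Basis = insert b1 (insert b2 I)" and I: "finite I" "b1 \<notin> insert b2 I" "b2 \<notin> I"
    using b1 b2 by (auto simp: I_def)
  have card_I: "card I = DIM('a) - 2"
    using b1 b2 \<open>b1 \<noteq> b2\<close> by (simp add: I_def card_Diff_subset)
  have E_inner: "v \<bullet> E f = (\<Sum>c\<in>Basis. f c * (v \<bullet> c))" for v f
    by (simp add: E_def inner_sum_right)
  have E_coord: "E f \<bullet> c = f c" if "c \<in> Basis" for f c
    using that by (simp add: E_def inner_sum_left inner_Basis if_distrib cong: if_cong)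
  have [measurable]: "S \<in> sets borel" "E \<in> borel_measurable (\<Pi>\<^sub>M c\<in>Basis. lborel)"
    unfolding S_def E_def by measurable
  define T where "T = {x \<in> space (\<Pi>\<^sub>M c\<in>insert b2 I. lborel).
    \<bar>(\<Sum>c\<in>insert b2 I. x c * (b \<bullet> c)) - \<beta>\<bar> \<le> r \<and> (\<forall>c\<in>insert b2 I. \<bar>x c\<bar> \<le> M)}"
  have T_meas: "T \<in> sets (\<Pi>\<^sub>M c\<in>insert b2 I. lborel)"
    unfolding T_def using I(1) by measurable (auto simp: I(1) intro!: borel_measurable_le measurable_component_singleton)
  have "emeasure lborel S = emeasure (\<Pi>\<^sub>M c\<in>Basis. lborel) (E -` S \<inter> space (\<Pi>\<^sub>M c\<in>Basis. lborel))"
    by (subst lborel_eq) (simp add: emeasure_distr E_def[abs_def])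
  also have "\<dots> \<le> ennreal (2 * r / \<bar>a \<bullet> b1\<bar>) * emeasure (\<Pi>\<^sub>M c\<in>insert b2 I. lborel) T"
    unfolding Basis
  proof (rule emeasure_PiM_insert_strip_le[of _ _ _ _ _ _ "\<lambda>x. (\<Sum>c\<in>insert b2 I. x c * (a \<bullet> c)) - \<alpha>"])
    fix x s assume x: "x \<in> space (\<Pi>\<^sub>M c\<in>insert b2 I. lborel)"
      and xs: "x(b1 := s) \<in> E -` S \<inter> space (\<Pi>\<^sub>M c\<in>insert b1 (insert b2 I). lborel)"
    have "v \<bullet> E (x(b1 := s)) = s * (v \<bullet> b1) + (\<Sum>c\<in>insert b2 I. x c * (v \<bullet> c))" for v
      unfolding E_inner using I by (subst sum_fun_upd_remove) (auto simp: Basis)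
    moreover have "\<bar>x c\<bar> \<le> M" if "c \<in> insert b2 I" for c
    proof -
      have "c \<in> Basis" "c \<noteq> b1"
        using that I by (auto simp: Basis)
      then show ?thesis
        using xs E_coord[of c "x(b1 := s)"] by (auto simp: S_def)
    qed
    ultimately show "x \<in> T \<and> \<bar>s * (a \<bullet> b1) + ((\<Sum>c\<in>insert b2 I. x c * (a \<bullet> c)) - \<alpha>)\<bar> \<le> r"
      using xs x b2 by (auto simp: S_def T_def slab_pair_def add_diff_eq)
  qed (use I b1 r T_meas in \<open>simp_all flip: Basis\<close>)
  also have "emeasure (\<Pi>\<^sub>M c\<in>insert b2 I. lborel) T
      \<le> ennreal (2 * r / \<bar>b \<bullet> b2\<bar>) * ennreal ((2 * M) ^ (DIM('a) - 2))"
    unfolding T_def card_I[symmetric] using I b2 r M by (intro emeasure_PiM_strip_box_le) auto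
  finally show ?thesis
    unfolding S_def using r by (simp add: mult_left_mono)
qed

lemma slab_pair_subset_shear:
  assumes "0 \<le> r"
  shows "slab_pair a \<alpha> b \<beta> r \<subseteq> slab_pair a \<alpha> (b - \<mu> *\<^sub>R a) (\<beta> - \<mu> * \<alpha>) ((1 + \<bar>\<mu>\<bar>) * r)"
proof
  fix y assume y: "y \<in> slab_pair a \<alpha> b \<beta> r"
  have "(b - \<mu> *\<^sub>R a) \<bullet> y - (\<beta> - \<mu> * \<alpha>) = (b \<bullet> y - \<beta>) - \<mu> * (a \<bullet> y - \<alpha>)"
    by (simp add: inner_diff_left algebra_simps)
  also have "\<bar>\<dots>\<bar> \<le> \<bar>b \<bullet> y - \<beta>\<bar> + \<bar>\<mu>\<bar> * \<bar>a \<bullet> y - \<alpha>\<bar>"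
    by (metis abs_mult abs_triangle_ineq4)
  also have "\<dots> \<le> r + \<bar>\<mu>\<bar> * r"
    using y unfolding slab_pair_def by (intro add_mono mult_left_mono) auto
  finally show "y \<in> slab_pair a \<alpha> (b - \<mu> *\<^sub>R a) (\<beta> - \<mu> * \<alpha>) ((1 + \<bar>\<mu>\<bar>) * r)"
    using y assms by (simp add: slab_pair_def algebra_simps add_increasing2)
qed

lemma emeasure_slab_pair_bounded_le:
  fixes a b :: "'a::euclidean_space"
  assumes B: "bounded B" and a: "a \<noteq> 0" and b: "\<forall>\<mu>. b \<noteq> \<mu> *\<^sub>R a"
  obtains K where "0 \<le> K" "\<And>\<alpha> \<beta> r. 0 \<le> r \<Longrightarrow> emeasure lborel (slab_pair a \<alpha> b \<beta> r \<inter> B) \<le> ennreal (K * r\<^sup>2)"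
proof -
  obtain M where M: "0 < M" "\<And>y. y \<in> B \<Longrightarrow> norm y \<le> M"
    using B bounded_pos by blast
  obtain b1 where b1: "b1 \<in> Basis" "a \<bullet> b1 \<noteq> 0"
    using a euclidean_all_zero_iff by blast
  define \<mu> where "\<mu> = (b \<bullet> b1) / (a \<bullet> b1)"
  define b' where "b' = b - \<mu> *\<^sub>R a"
  have b'b1: "b' \<bullet> b1 = 0"
    using b1 by (simp add: b'_def \<mu>_def inner_diff_left)
  have "b' \<noteq> 0"
    using b by (auto simp: b'_def)
  then obtain b2 where b2: "b2 \<in> Basis" "b' \<bullet> b2 \<noteq> 0"
    using euclidean_all_zero_iff by blast
  define K where "K = 2 * (1 + \<bar>\<mu>\<bar>) / \<bar>a \<bullet> b1\<bar> * (2 * (1 + \<bar>\<mu>\<bar>) / \<bar>b' \<bullet> b2\<bar>) * (2 * M) ^ (DIM('a) - 2)"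
  have "emeasure lborel (slab_pair a \<alpha> b \<beta> r \<inter> B) \<le> ennreal (K * r\<^sup>2)" if r: "0 \<le> r" for \<alpha> \<beta> r
  proof -
    define r' where "r' = (1 + \<bar>\<mu>\<bar>) * r"
    have "\<bar>y \<bullet> c\<bar> \<le> M" if "y \<in> B" "c \<in> Basis" for y c
      using Basis_le_norm[OF that(2), of y] M(2)[OF that(1)] by linarith
    then have "slab_pair a \<alpha> b \<beta> r \<inter> B
        \<subseteq> slab_pair a \<alpha> b' (\<beta> - \<mu> * \<alpha>) r' \<inter> {y. \<forall>c\<in>Basis. \<bar>y \<bullet> c\<bar> \<le> M}"
      using slab_pair_subset_shear[OF r, of a \<alpha> b \<beta> \<mu>] unfolding b'_def r'_def by blast
    then have "emeasure lborel (slab_pair a \<alpha> b \<beta> r \<inter> B)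
        \<le> emeasure lborel (slab_pair a \<alpha> b' (\<beta> - \<mu> * \<alpha>) r' \<inter> {y. \<forall>c\<in>Basis. \<bar>y \<bullet> c\<bar> \<le> M})"
      by (rule emeasure_mono) measurable
    also have "\<dots> \<le> ennreal (2 * r' / \<bar>a \<bullet> b1\<bar>) * (ennreal (2 * r' / \<bar>b' \<bullet> b2\<bar>) * ennreal ((2 * M) ^ (DIM('a) - 2)))"
      using b1 b2 b'b1 M r by (intro emeasure_slab_pair_box_le) (auto simp: r'_def)
    also have "\<dots> = ennreal (2 * r' / \<bar>a \<bullet> b1\<bar> * (2 * r' / \<bar>b' \<bullet> b2\<bar>) * (2 * M) ^ (DIM('a) - 2))"
    proof -
      have "0 \<le> 2 * r' / \<bar>a \<bullet> b1\<bar>" "0 \<le> 2 * r' / \<bar>b' \<bullet> b2\<bar>"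
        using r by (simp_all add: r'_def)
      then show ?thesis
        by (simp only: mult.assoc ennreal_mult')
    qed
    also have "2 * r' / \<bar>a \<bullet> b1\<bar> * (2 * r' / \<bar>b' \<bullet> b2\<bar>) * (2 * M) ^ (DIM('a) - 2) = K * r\<^sup>2"
      by (simp add: K_def r'_def power2_eq_square field_simps)
    finally show ?thesis .
  qed
  moreover have "0 \<le> K"
    using M by (simp add: K_def)
  ultimately show ?thesis
    using that by blast
qed

lemma slab_pair_parallel_eq_empty:
  assumes "(1 + \<bar>\<mu>\<bar>) * r < \<bar>\<beta> - \<mu> * \<alpha>\<bar>"
  shows "slab_pair a \<alpha> (\<mu> *\<^sub>R a) \<beta> r = {}"
proof safe
  fix y assume y: "y \<in> slab_pair a \<alpha> (\<mu> *\<^sub>R a) \<beta> r"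
  have "\<bar>\<beta> - \<mu> * \<alpha>\<bar> = \<bar>\<mu> * (a \<bullet> y - \<alpha>) - (\<mu> * (a \<bullet> y) - \<beta>)\<bar>"
    by (simp add: algebra_simps)
  also have "\<dots> \<le> \<bar>\<mu>\<bar> * \<bar>a \<bullet> y - \<alpha>\<bar> + \<bar>\<mu> * (a \<bullet> y) - \<beta>\<bar>"
    by (metis abs_mult abs_triangle_ineq4)
  also have "\<dots> \<le> \<bar>\<mu>\<bar> * r + r"
    using y unfolding slab_pair_def by (intro add_mono mult_left_mono) auto
  finally show "y \<in> {}"
    using assms by (simp add: algebra_simps)
qed

section \<open>Measures with bounded compactly supported densities\<close>

lemma emeasure_density_le_bounded:
  fixes \<rho> :: "'a::euclidean_space \<Rightarrow> real"
  assumes \<rho>: "\<rho> \<in> borel_measurable borel" and bound: "\<And>y. y \<in> Y \<Longrightarrow> \<rho> y \<le> B"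
    and zero: "\<And>y. y \<notin> Y \<Longrightarrow> \<rho> y = 0" and S: "S \<in> sets borel" and Y: "Y \<in> sets borel"
  shows "emeasure (density lborel (\<lambda>y. ennreal (\<rho> y))) S \<le> ennreal B * emeasure lborel (S \<inter> Y)"
proof -
  have "emeasure (density lborel (\<lambda>y. ennreal (\<rho> y))) S = (\<integral>\<^sup>+y. ennreal (\<rho> y) * indicator S y \<partial>lborel)"
    using S \<rho> by (subst emeasure_density) auto
  also have "\<dots> \<le> (\<integral>\<^sup>+y. ennreal B * indicator (S \<inter> Y) y \<partial>lborel)"
    using bound zero by (intro nn_integral_mono) (auto simp: indicator_def intro: ennreal_leI)
  also have "\<dots> = ennreal B * emeasure lborel (S \<inter> Y)"
    using S Y by (intro nn_integral_cmult_indicator) auto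
  finally show ?thesis .
qed

lemma measure_density_slab_pair_bigo:
  fixes \<rho> :: "'a::euclidean_space \<Rightarrow> real"
  assumes \<rho>: "\<rho> \<in> borel_measurable borel" "continuous_on Y \<rho>" "\<And>y. y \<notin> Y \<Longrightarrow> \<rho> y = 0"
    and Y: "compact Y" and a: "a \<noteq> 0" and b: "\<forall>\<mu>. b \<noteq> \<mu> *\<^sub>R a" and c: "0 \<le> c"
  shows "(\<lambda>t. measure (density lborel (\<lambda>y. ennreal (\<rho> y))) (slab_pair a \<alpha> b \<beta> (c * t)))
    \<in> O[at_right 0](\<lambda>t. t\<^sup>2)"
proof -
  obtain B where B: "0 < B" "\<And>y. y \<in> Y \<Longrightarrow> \<rho> y \<le> B"
    using compact_imp_bounded[OF compact_continuous_image[OF \<rho>(2) Y]]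
    by (auto simp: bounded_pos dest: abs_le_D1)
  obtain K where K: "0 \<le> K" "\<And>r. 0 \<le> r \<Longrightarrow> emeasure lborel (slab_pair a \<alpha> b \<beta> r \<inter> Y) \<le> ennreal (K * r\<^sup>2)"
    using emeasure_slab_pair_bounded_le[OF compact_imp_bounded[OF Y] a b] by metis
  have "measure (density lborel (\<lambda>y. ennreal (\<rho> y))) (slab_pair a \<alpha> b \<beta> (c * t)) \<le> B * K * c\<^sup>2 * t\<^sup>2"
    if t: "0 < t" for t
    unfolding measure_def
  proof (rule enn2real_leI)
    have "emeasure (density lborel (\<lambda>y. ennreal (\<rho> y))) (slab_pair a \<alpha> b \<beta> (c * t))
        \<le> ennreal B * emeasure lborel (slab_pair a \<alpha> b \<beta> (c * t) \<inter> Y)"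
      using \<rho> B Y by (intro emeasure_density_le_bounded) (auto intro: borel_compact)
    also have "\<dots> \<le> ennreal B * ennreal (K * (c * t)\<^sup>2)"
      using K c t by (intro mult_left_mono) auto
    finally show "emeasure (density lborel (\<lambda>y. ennreal (\<rho> y))) (slab_pair a \<alpha> b \<beta> (c * t))
        \<le> ennreal (B * K * c\<^sup>2 * t\<^sup>2)"
      using B K by (simp add: ennreal_mult power_mult_distrib mult.assoc)
  qed (use B K in simp)
  then show ?thesis
    by (intro bigoI[where c = "B * K * c\<^sup>2"] eventually_mono[OF eventually_at_right_less]) simp
qed

lemma measure_density_hyperplane:
  fixes \<rho> :: "'a::euclidean_space \<Rightarrow> real"
  assumes \<rho>: "\<rho> \<in> borel_measurable borel" and a: "a \<noteq> 0"
  shows "measure (density lborel (\<lambda>y. ennreal (\<rho> y))) {y. a \<bullet> y = \<beta>} = 0"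
proof -
  have "{y. a \<bullet> y = \<beta>} \<in> null_sets lebesgue"
    using negligible_hyperplane[of a \<beta>] a by (simp add: negligible_iff_null_sets)
  then have "{y. a \<bullet> y = \<beta>} \<in> null_sets lborel"
    by (simp add: null_sets_completion_iff)
  then show ?thesis
    using \<rho> by (simp add: measure_def emeasure_density nn_integral_null_set)
qed

section \<open>Power cells and the first-order optimality condition\<close>

lemma bij_coef_swap: "bij_coef x z j i = - bij_coef x z i j"
  unfolding bij_coef_def by (simp add: field_simps)

lemma bij_coef_trans: "bij_coef x z i j + bij_coef x z j k = bij_coef x z i k"
  unfolding bij_coef_def by (simp add: field_simps)

lemma bij_coef_shift: "bij_coef x (\<lambda>k. z k + t * h k) i k = bij_coef x z i k - t * h i + t * h k"
  unfolding bij_coef_def by simp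

lemma potential_diff:
  "((norm (y - x l))\<^sup>2 / 2 - z l) - ((norm (y - x m))\<^sup>2 / 2 - z m) = (x m - x l) \<bullet> y - bij_coef x z m l"
  unfolding bij_coef_def power2_norm_eq_inner
  by (simp add: inner_diff_left inner_diff_right inner_commute field_simps)

lemma mem_cell_raise_iff:
  "y \<in> cell N x (z(m := z m + \<delta>)) m \<longleftrightarrow> (\<forall>l<N. l \<noteq> m \<longrightarrow> bij_coef x z m l - \<delta> \<le> (x m - x l) \<bullet> y)"
  unfolding cell_def bij_coef_def by auto

lemma cell_borel [measurable]: "cell N x z i \<in> sets borel"
  unfolding cell_def by measurable

lemma dual_integrand_raise_ge:
  assumes m: "m < N" and \<delta>: "0 \<le> \<delta>"
  shows "Min ((\<lambda>l. (norm (y - x l))\<^sup>2 / 2 - z l) ` {..<N}) - \<delta> * indicator (cell N x (z(m := z m + \<delta>)) m) y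
    \<le> Min ((\<lambda>l. (norm (y - x l))\<^sup>2 / 2 - (z(m := z m + \<delta>)) l) ` {..<N})"
    (is "?F z - _ \<le> ?F ?z'")
proof (cases "y \<in> cell N x (z(m := z m + \<delta>)) m")
  case True
  have "?F z - \<delta> \<le> (norm (y - x l))\<^sup>2 / 2 - (z(m := z m + \<delta>)) l" if "l < N" for l
  proof -
    have "?F z \<le> (norm (y - x l))\<^sup>2 / 2 - z l"
      using that by (intro Min_le) auto
    then show ?thesis
      using \<delta> by auto
  qed
  then show ?thesis
    using True m by (auto intro!: Min.boundedI)
next
  case False
  then obtain l0 where l0: "l0 < N" "l0 \<noteq> m" "(x m - x l0) \<bullet> y < bij_coef x z m l0 - \<delta>"
    unfolding mem_cell_raise_iff by (auto simp: not_le)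
  have "(norm (y - x l0))\<^sup>2 / 2 - z l0 < (norm (y - x m))\<^sup>2 / 2 - (z m + \<delta>)"
    using l0(3) potential_diff[of y x l0 z m] by simp
  moreover have Min_le_potential: "?F z \<le> (norm (y - x l))\<^sup>2 / 2 - z l" if "l < N" for l
    using that by (intro Min_le) auto
  ultimately have "?F z \<le> (norm (y - x l))\<^sup>2 / 2 - (z(m := z m + \<delta>)) l" if "l < N" for l
    using that Min_le_potential[OF that] Min_le_potential[OF l0(1)] by (cases "l = m") auto
  then show ?thesis
    using False m by (auto intro!: Min.boundedI)
qed

lemma dual_obj_raise_ge:
  fixes R :: "'a::euclidean_space measure"
  assumes R: "finite_measure R" "sets R = sets borel"
    and integ: "\<And>z. integrable R (\<lambda>y. Min ((\<lambda>l. (norm (y - x l))\<^sup>2 / 2 - z l) ` {..<N}))"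
    and m: "m < N" and \<delta>: "0 \<le> \<delta>"
  shows "dual_obj N x p R z + \<delta> * (p m - measure R (cell N x (z(m := z m + \<delta>)) m))
    \<le> dual_obj N x p R (z(m := z m + \<delta>))"
proof -
  interpret finite_measure R by (rule R(1))
  define C where "C = cell N x (z(m := z m + \<delta>)) m"
  have C: "C \<in> sets R"
    using R(2) by (simp add: C_def)
  have "(\<Sum>i<N. p i * (z(m := z m + \<delta>)) i) = (\<Sum>i<N. p i * z i + (if i = m then p m * \<delta> else 0))"
    by (intro sum.cong) (auto simp: algebra_simps)
  also have "\<dots> = (\<Sum>i<N. p i * z i) + p m * \<delta>"
    using m by (simp add: sum.distrib)
  finally have sum_eq: "(\<Sum>i<N. p i * (z(m := z m + \<delta>)) i) = (\<Sum>i<N. p i * z i) + p m * \<delta>" .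
  have "(\<integral>y. Min ((\<lambda>l. (norm (y - x l))\<^sup>2 / 2 - z l) ` {..<N}) \<partial>R) - \<delta> * measure R C
      = (\<integral>y. Min ((\<lambda>l. (norm (y - x l))\<^sup>2 / 2 - z l) ` {..<N}) - \<delta> * indicator C y \<partial>R)"
    using integ C emeasure_real[of C]
    by (subst Bochner_Integration.integral_diff) (auto simp: integral_indicator)
  also have "\<dots> \<le> (\<integral>y. Min ((\<lambda>l. (norm (y - x l))\<^sup>2 / 2 - (z(m := z m + \<delta>)) l) ` {..<N}) \<partial>R)"
    unfolding C_def using integ C m \<delta>
    by (intro integral_mono dual_integrand_raise_ge Bochner_Integration.integrable_diff
        integrable_mult_right integrable_real_indicator) (auto simp: C_def less_top[symmetric])
  finally show ?thesis
    unfolding dual_obj_def sum_eq C_def by (simp add: algebra_simps)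
qed

(* Raising z_m by \<delta> gains \<delta> p_m in the linear part of the dual objective and loses at most
   \<delta> R(C_m(z + \<delta> e_m)) in the integral; these cells decrease to C_m(z) as \<delta> tends to 0. *)
lemma measure_cell_ge_weight:
  fixes R :: "'a::euclidean_space measure"
  assumes R: "finite_measure R" "sets R = sets borel"
    and integ: "\<And>z. integrable R (\<lambda>y. Min ((\<lambda>l. (norm (y - x l))\<^sup>2 / 2 - z l) ` {..<N}))"
    and opt: "\<And>z. dual_obj N x p R z \<le> dual_obj N x p R zs"
    and m: "m < N"
  shows "p m \<le> measure R (cell N x zs m)"
proof (rule ccontr)
  interpret finite_measure R by (rule R(1))
  assume less: "\<not> p m \<le> measure R (cell N x zs m)"
  define A where "A n = cell N x (zs(m := zs m + 1 / Suc n)) m" for n :: nat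
  have A: "range A \<subseteq> sets R"
    unfolding A_def R(2) using cell_borel by blast
  have "decseq A"
  proof (rule decseq_SucI)
    fix n
    have "1 / real (Suc (Suc n)) \<le> 1 / Suc n"
      by (simp add: frac_le)
    then show "A (Suc n) \<subseteq> A n"
      unfolding A_def subset_iff mem_cell_raise_iff by (meson diff_left_mono order_trans)
  qed
  have approx: "(\<forall>n. b - 1 / Suc n \<le> v) \<longleftrightarrow> b \<le> v" for b v :: real
  proof
    assume le: "\<forall>n. b - 1 / Suc n \<le> v"
    show "b \<le> v"
    proof (rule ccontr)
      assume "\<not> b \<le> v"
      then obtain n :: nat where "1 / Suc n < b - v"
        by (metis diff_gt_0_iff_gt not_le nat_approx_posE)
      then show False
        using le[rule_format, of n] by linarith
    qed
  qed (smt (verit) divide_nonneg_nonneg of_nat_0_le_iff)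
  have "y \<in> (\<Inter>n. A n) \<longleftrightarrow> (\<forall>l<N. l \<noteq> m \<longrightarrow> (\<forall>n. bij_coef x zs m l - 1 / Suc n \<le> (x m - x l) \<bullet> y))" for y
    by (auto simp: A_def mem_cell_raise_iff)
  then have "(\<Inter>n. A n) = cell N x zs m"
    unfolding approx cell_def by blast
  then have "(\<lambda>n. measure R (A n)) \<longlonglongrightarrow> measure R (cell N x zs m)"
    using finite_Lim_measure_decseq[OF A \<open>decseq A\<close>] by simp
  then have "eventually (\<lambda>n. measure R (A n) < p m) sequentially"
    by (rule order_tendstoD(2)) (use less in simp)
  then obtain n where n: "measure R (A n) < p m"
    by (auto simp: eventually_sequentially)
  have "dual_obj N x p R zs < dual_obj N x p R zs + 1 / Suc n * (p m - measure R (A n))"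
    using n by simp
  also have "\<dots> \<le> dual_obj N x p R (zs(m := zs m + 1 / Suc n))"
    unfolding A_def by (rule dual_obj_raise_ge[OF R integ m]) simp
  finally show False
    using opt[of "zs(m := zs m + 1 / Suc n)"] by simp
qed

lemma integrable_dual_integrand:
  fixes R :: "'a::euclidean_space measure" and N :: nat
  assumes R: "finite_measure R" "sets R = sets borel" and supp: "AE y in R. y \<in> Y"
    and Y: "bounded Y" and N: "0 < N"
  shows "integrable R (\<lambda>y. Min ((\<lambda>l. (norm (y - x l))\<^sup>2 / 2 - z l) ` {..<N}))"
proof -
  interpret finite_measure R by (rule R(1))
  obtain M where M: "\<And>y. y \<in> Y \<Longrightarrow> norm y \<le> M"
    using Y bounded_iff by blast
  define B where "B = (\<Sum>l<N. (M + norm (x l))\<^sup>2 / 2 + \<bar>z l\<bar>)"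
  have "\<bar>Min ((\<lambda>l. (norm (y - x l))\<^sup>2 / 2 - z l) ` {..<N})\<bar> \<le> B" if y: "y \<in> Y" for y
  proof -
    have "Min ((\<lambda>l. (norm (y - x l))\<^sup>2 / 2 - z l) ` {..<N}) \<in> (\<lambda>l. (norm (y - x l))\<^sup>2 / 2 - z l) ` {..<N}"
      by (rule Min_in) (use N in auto)
    then obtain l0 where l0: "l0 < N" "Min ((\<lambda>l. (norm (y - x l))\<^sup>2 / 2 - z l) ` {..<N}) = (norm (y - x l0))\<^sup>2 / 2 - z l0"
      by auto
    have "norm (y - x l) \<le> M + norm (x l)" for l
      using M[OF y] norm_triangle_ineq4[of y "x l"] by linarith
    then have sq: "(norm (y - x l))\<^sup>2 \<le> (M + norm (x l))\<^sup>2" for l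
      by (intro power_mono) auto
    have "\<bar>(norm (y - x l))\<^sup>2 / 2 - z l\<bar> \<le> (M + norm (x l))\<^sup>2 / 2 + \<bar>z l\<bar>" for l
      using sq[of l] zero_le_power2[of "norm (y - x l)"] zero_le_power2[of "M + norm (x l)"]
      unfolding abs_le_iff by linarith
    then have "\<bar>(norm (y - x l0))\<^sup>2 / 2 - z l0\<bar> \<le> B"
      unfolding B_def using l0(1) by (intro order_trans[OF _ member_le_sum]) auto
    then show ?thesis
      using l0(2) by simp
  qed
  then show ?thesis
    using supp R(2) by (intro integrable_const_bound[where B = B]) (auto elim!: AE_mp)
qed

lemma optimal_cell_not_in_hyperplane:
  fixes R :: "'a::euclidean_space measure"
  assumes R: "finite_measure R" "sets R = sets borel"
    and integ: "\<And>z. integrable R (\<lambda>y. Min ((\<lambda>l. (norm (y - x l))\<^sup>2 / 2 - z l) ` {..<N}))"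
    and opt: "\<And>z. dual_obj N x p R z \<le> dual_obj N x p R zs"
    and m: "m < N" "0 < p m" and null: "measure R {y. a \<bullet> y = \<beta>} = 0"
  shows "\<not> cell N x zs m \<subseteq> {y. a \<bullet> y = \<beta>}"
proof
  interpret finite_measure R by (rule R(1))
  assume flat: "cell N x zs m \<subseteq> {y. a \<bullet> y = \<beta>}"
  have "p m \<le> measure R (cell N x zs m)"
    by (rule measure_cell_ge_weight[OF R integ opt m(1)])
  also have "\<dots> \<le> measure R {y. a \<bullet> y = \<beta>}"
    using flat R(2) by (intro finite_measure_mono) auto
  finally show False
    using m(2) null by simp
qed

section \<open>Perturbed cells\<close>

lemma cell_Int_cell_subset_Dset:
  assumes "i < N" "i \<noteq> j"
  shows "cell N x (\<lambda>k. z k + t * h1 k) i \<inter> cell N x (\<lambda>k. z k + t * h2 k) j \<subseteq> Dset N x z i j h1 h2 t"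
proof
  fix y assume y: "y \<in> cell N x (\<lambda>k. z k + t * h1 k) i \<inter> cell N x (\<lambda>k. z k + t * h2 k) j"
  then have "bij_coef x (\<lambda>k. z k + t * h2 k) j i \<le> (x j - x i) \<bullet> y"
    using assms unfolding cell_def by auto
  then have "(x i - x j) \<bullet> y - bij_coef x z i j \<le> t * (h2 j - h2 i)"
    unfolding bij_coef_shift bij_coef_swap[of x z j i] by (simp add: inner_diff_left algebra_simps)
  then show "y \<in> Dset N x z i j h1 h2 t"
    using y unfolding Dset_def by auto
qed

(* The cell of the middle one of the three collinear points is squeezed into the hyperplane:
   the middle point is x_i if \<mu> < 0, x_k if 0 < \<mu> < 1, and x_j if \<mu> > 1. *)
lemma collinear_cell_subset_hyperplane:
  assumes idx: "i < N" "j < N" "k < N" "i \<noteq> j" "i \<noteq> k" "j \<noteq> k"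
    and collinear: "x i - x k = \<mu> *\<^sub>R (x i - x j)" and consistent: "bij_coef x z i k = \<mu> * bij_coef x z i j"
    and \<mu>: "\<mu> \<noteq> 0" "\<mu> \<noteq> 1"
  obtains m where "m < N" "cell N x z m \<subseteq> {y. (x i - x j) \<bullet> y = bij_coef x z i j}"
proof -
  define u where "u y = (x i - x j) \<bullet> y - bij_coef x z i j" for y
  have gap_ij: "(x j - x i) \<bullet> y - bij_coef x z j i = - u y" for y
    unfolding u_def bij_coef_swap[of x z j i] by (simp add: inner_diff_left)
  have gap_ik: "(x i - x k) \<bullet> y - bij_coef x z i k = \<mu> * u y" and
    gap_ki: "(x k - x i) \<bullet> y - bij_coef x z k i = - (\<mu> * u y)" for y
    unfolding u_def bij_coef_swap[of x z k i] consistent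
    using arg_cong[OF collinear, of "\<lambda>v. v \<bullet> y"] by (simp_all add: inner_diff_left algebra_simps)
  have gap_jk: "(x j - x k) \<bullet> y - bij_coef x z j k = (\<mu> - 1) * u y" and
    gap_kj: "(x k - x j) \<bullet> y - bij_coef x z k j = (1 - \<mu>) * u y" for y
    using gap_ij[of y] gap_ik[of y] bij_coef_trans[of x z j i k] bij_coef_swap[of x z k j]
    by (simp_all add: inner_diff_left algebra_simps)
  have mem_cell: "bij_coef x z m l \<le> (x m - x l) \<bullet> y"
    if "y \<in> cell N x z m" "l < N" "l \<noteq> m" for y m l
    using that unfolding cell_def by auto
  consider "\<mu> < 0" | "0 < \<mu>" "\<mu> < 1" | "1 < \<mu>"
    using \<mu> by linarith
  then show ?thesis
  proof cases
    case 1
    have "u y = 0" if "y \<in> cell N x z i" for y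
    proof -
      have "0 \<le> u y" "0 \<le> \<mu> * u y"
        using mem_cell[OF that, of j] mem_cell[OF that, of k] idx gap_ik[of y] by (auto simp: u_def)
      then show ?thesis
        using 1 by (auto simp: zero_le_mult_iff)
    qed
    then show ?thesis
      using that idx by (auto simp: u_def)
  next
    case 2
    have "u y = 0" if "y \<in> cell N x z k" for y
    proof -
      have "0 \<le> - (\<mu> * u y)" "0 \<le> (1 - \<mu>) * u y"
        using mem_cell[OF that, of i] mem_cell[OF that, of j] idx gap_ki[of y] gap_kj[of y] by auto
      then show ?thesis
        using 2 by (auto simp: zero_le_mult_iff mult_le_0_iff)
    qed
    then show ?thesis
      using that idx by (auto simp: u_def)
  next
    case 3
    have "u y = 0" if "y \<in> cell N x z j" for y
    proof -
      have "0 \<le> - u y" "0 \<le> (\<mu> - 1) * u y"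
        using mem_cell[OF that, of i] mem_cell[OF that, of k] idx gap_ij[of y] gap_jk[of y] by auto
      then show ?thesis
        using 3 by (auto simp: zero_le_mult_iff)
    qed
    then show ?thesis
      using that idx by (auto simp: u_def)
  qed
qed

lemma Dset_diff_cell_subset_slab_pairs:
  assumes ij: "i < N" "j < N" "i \<noteq> j" and t: "0 \<le> t"
    and H: "\<And>l. l < N \<Longrightarrow> \<bar>h1 l\<bar> \<le> H \<and> \<bar>h2 l\<bar> \<le> H"
  shows "Dset N x z i j h1 h2 t - cell N x (\<lambda>k. z k + t * h2 k) j
    \<subseteq> (\<Union>k\<in>{k. k < N \<and> k \<noteq> i \<and> k \<noteq> j}.
          slab_pair (x i - x j) (bij_coef x z i j) (x i - x k) (bij_coef x z i k) (2 * H * t))"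
proof
  fix y assume y: "y \<in> Dset N x z i j h1 h2 t - cell N x (\<lambda>k. z k + t * h2 k) j"
  define g where "g l m = (x l - x m) \<bullet> y - bij_coef x z l m" for l m
  have g_swap: "g m l = - g l m" for l m
    unfolding g_def bij_coef_swap[of x z m l] by (simp add: inner_diff_left)
  have g_trans: "g l m + g m n = g l n" for l m n
    unfolding g_def bij_coef_trans[of x z l m n, symmetric] by (simp add: inner_diff_left)
  have spread: "\<bar>t * (h l - h m)\<bar> \<le> 2 * H * t" if "\<bar>h l\<bar> \<le> H" "\<bar>h m\<bar> \<le> H" for h :: "nat \<Rightarrow> real" and l m
  proof -
    have "\<bar>h l - h m\<bar> \<le> 2 * H"
      using that abs_triangle_ineq4[of "h l" "h m"] by linarith
    then show ?thesis
      using t by (simp add: abs_mult mult_right_mono mult.commute[of t])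
  qed
  have in_i: "t * (h1 l - h1 i) \<le> g i l" if "l < N" "l \<noteq> i" for l
    using y that unfolding Dset_def cell_def g_def bij_coef_shift by (auto simp: algebra_simps)
  have in_D: "g i j \<le> t * (h2 j - h2 i)"
    using y unfolding Dset_def g_def by auto
  obtain k where k: "k < N" "k \<noteq> j" "g j k < t * (h2 k - h2 j)"
    using y unfolding cell_def g_def bij_coef_shift by (auto simp: not_le algebra_simps)
  have "k \<noteq> i"
    using k(3) in_D g_swap[of j i] by (auto simp: algebra_simps)
  have "\<bar>g i j\<bar> \<le> 2 * H * t"
    using in_i[of j] in_D spread[of h1 j i] spread[of h2 j i] H ij by (fastforce simp: abs_le_iff)
  moreover have "\<bar>g i k\<bar> \<le> 2 * H * t"
    using in_i[of k] in_D k g_trans[of i j k] spread[of h1 k i] spread[of h2 k i] H ij \<open>k \<noteq> i\<close>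
    by (fastforce simp: abs_le_iff algebra_simps)
  ultimately show "y \<in> (\<Union>k\<in>{k. k < N \<and> k \<noteq> i \<and> k \<noteq> j}.
      slab_pair (x i - x j) (bij_coef x z i j) (x i - x k) (bij_coef x z i k) (2 * H * t))"
    using k \<open>k \<noteq> i\<close> by (auto simp: slab_pair_def g_def)
qed

lemma measure_slab_pair_triple_bigo:
  fixes R :: "'a::euclidean_space measure"
  assumes idx: "i < N" "j < N" "k < N" "i \<noteq> j" "i \<noteq> k" "j \<noteq> k" and x: "inj_on x {..<N}"
    and no_flat: "\<And>m a \<beta>. m < N \<Longrightarrow> a \<noteq> 0 \<Longrightarrow> \<not> cell N x z m \<subseteq> {y. a \<bullet> y = \<beta>}"
    and slab: "\<And>b \<beta>. \<forall>\<mu>. b \<noteq> \<mu> *\<^sub>R (x i - x j) \<Longrightarrow>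
      (\<lambda>t. measure R (slab_pair (x i - x j) (bij_coef x z i j) b \<beta> (c * t))) \<in> O[at_right 0](\<lambda>t. t\<^sup>2)"
  shows "(\<lambda>t. measure R (slab_pair (x i - x j) (bij_coef x z i j) (x i - x k) (bij_coef x z i k) (c * t)))
    \<in> O[at_right 0](\<lambda>t. t\<^sup>2)"
proof (cases "\<forall>\<mu>. x i - x k \<noteq> \<mu> *\<^sub>R (x i - x j)")
  case True
  then show ?thesis
    by (rule slab)
next
  case False
  then obtain \<mu> where \<mu>: "x i - x k = \<mu> *\<^sub>R (x i - x j)"
    by blast
  have distinct: "x i \<noteq> x j" "x i \<noteq> x k" "x j \<noteq> x k"
    using x idx by (auto dest: inj_onD)
  then have "\<mu> \<noteq> 0" "\<mu> \<noteq> 1"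
    using \<mu> by auto
  have "bij_coef x z i k \<noteq> \<mu> * bij_coef x z i j"
  proof
    assume "bij_coef x z i k = \<mu> * bij_coef x z i j"
    then obtain m where "m < N" "cell N x z m \<subseteq> {y. (x i - x j) \<bullet> y = bij_coef x z i j}"
      using collinear_cell_subset_hyperplane idx \<mu> \<open>\<mu> \<noteq> 0\<close> \<open>\<mu> \<noteq> 1\<close> by metis
    then show False
      using no_flat distinct by auto
  qed
  moreover have "((\<lambda>t. (1 + \<bar>\<mu>\<bar>) * (c * t)) \<longlongrightarrow> 0) (at_right 0)"
    by (intro tendsto_eq_intros) auto
  ultimately have "eventually (\<lambda>t. (1 + \<bar>\<mu>\<bar>) * (c * t) < \<bar>bij_coef x z i k - \<mu> * bij_coef x z i j\<bar>) (at_right 0)"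
    by (intro order_tendstoD(2)) auto
  then have "eventually (\<lambda>t. measure R (slab_pair (x i - x j) (bij_coef x z i j) (x i - x k) (bij_coef x z i k) (c * t)) = 0)
      (at_right 0)"
    unfolding \<mu> by eventually_elim (simp add: slab_pair_parallel_eq_empty)
  then show ?thesis
    by (intro landau_o.big_mono) (auto elim: eventually_mono)
qed

lemma measure_Dset_diff_cell_bigo:
  fixes R :: "'a::euclidean_space measure"
  assumes R: "finite_measure R" "sets R = sets borel"
    and ij: "i < N" "j < N" "i \<noteq> j" and x: "inj_on x {..<N}"
    and no_flat: "\<And>m a \<beta>. m < N \<Longrightarrow> a \<noteq> 0 \<Longrightarrow> \<not> cell N x z m \<subseteq> {y. a \<bullet> y = \<beta>}"
    and slab: "\<And>a \<alpha> b \<beta> c. a \<noteq> 0 \<Longrightarrow> \<forall>\<mu>. b \<noteq> \<mu> *\<^sub>R a \<Longrightarrow> 0 \<le> c \<Longrightarrow>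
      (\<lambda>t. measure R (slab_pair a \<alpha> b \<beta> (c * t))) \<in> O[at_right 0](\<lambda>t. t\<^sup>2)"
  shows "(\<lambda>t. measure R (Dset N x z i j h1 h2 t - cell N x (\<lambda>k. z k + t * h2 k) j))
    \<in> O[at_right 0](\<lambda>t. t\<^sup>2)"
proof -
  interpret finite_measure R by (rule R(1))
  define H where "H = (\<Sum>l<N. \<bar>h1 l\<bar> + \<bar>h2 l\<bar>)"
  have H: "\<bar>h1 l\<bar> \<le> H \<and> \<bar>h2 l\<bar> \<le> H" if "l < N" for l
    using member_le_sum[of l "{..<N}" "\<lambda>l. \<bar>h1 l\<bar> + \<bar>h2 l\<bar>"] that by (auto simp: H_def)
  define K where "K = {k. k < N \<and> k \<noteq> i \<and> k \<noteq> j}"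
  define S where "S k t = slab_pair (x i - x j) (bij_coef x z i j) (x i - x k) (bij_coef x z i k) (2 * H * t)"
    for k t
  have "eventually (\<lambda>t. norm (measure R (Dset N x z i j h1 h2 t - cell N x (\<lambda>k. z k + t * h2 k) j))
      \<le> norm (\<Sum>k\<in>K. measure R (S k t))) (at_right 0)"
  proof (rule eventually_mono[OF eventually_at_right_less])
    fix t :: real assume "0 < t"
    then have "Dset N x z i j h1 h2 t - cell N x (\<lambda>k. z k + t * h2 k) j \<subseteq> (\<Union>k\<in>K. S k t)"
      unfolding K_def S_def using H by (intro Dset_diff_cell_subset_slab_pairs[OF ij]) auto
    then have "measure R (Dset N x z i j h1 h2 t - cell N x (\<lambda>k. z k + t * h2 k) j) \<le> measure R (\<Union>k\<in>K. S k t)"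
      using R(2) by (intro finite_measure_mono) (auto simp: K_def S_def)
    also have "\<dots> \<le> (\<Sum>k\<in>K. measure R (S k t))"
      using R(2) by (intro finite_measure_subadditive_finite) (simp_all add: K_def S_def image_subset_iff)
    finally show "norm (measure R (Dset N x z i j h1 h2 t - cell N x (\<lambda>k. z k + t * h2 k) j))
      \<le> norm (\<Sum>k\<in>K. measure R (S k t))"
      by (simp add: sum_nonneg)
  qed
  then have "(\<lambda>t. measure R (Dset N x z i j h1 h2 t - cell N x (\<lambda>k. z k + t * h2 k) j))
      \<in> O[at_right 0](\<lambda>t. \<Sum>k\<in>K. measure R (S k t))"
    by (rule landau_o.big_mono)
  also have "(\<lambda>t. \<Sum>k\<in>K. measure R (S k t)) \<in> O[at_right 0](\<lambda>t. t\<^sup>2)"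
  proof (rule big_sum_in_bigo)
    fix k assume "k \<in> K"
    have "x i - x j \<noteq> 0"
      using x ij by (auto dest: inj_onD)
    moreover have "0 \<le> 2 * H"
      using H[OF ij(1)] by linarith
    ultimately show "(\<lambda>t. measure R (S k t)) \<in> O[at_right 0](\<lambda>t. t\<^sup>2)"
      unfolding S_def using \<open>k \<in> K\<close> ij x no_flat
      by (intro measure_slab_pair_triple_bigo slab) (auto simp: K_def)
  qed
  finally show ?thesis .
qed

theorem mainTheorem8:
  fixes \<rho> :: "'d::euclidean_space \<Rightarrow> real"
    and Y :: "'d set"
    and N :: nat and x :: "nat \<Rightarrow> 'd" and p :: "nat \<Rightarrow> real"
    and zs :: "nat \<Rightarrow> real"
  defines "R \<equiv> density lborel (\<lambda>y. ennreal (\<rho> y))"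
  assumes rho_meas: "\<rho> \<in> borel_measurable borel"
    and rho_nonneg: "\<And>y. \<rho> y \<ge> 0"
    and R_prob: "prob_space R"
    and Y_compact: "compact Y" and Y_convex: "convex Y"
    and rho_cont: "continuous_on Y \<rho>"
    and rho_zero: "\<And>y. y \<notin> Y \<Longrightarrow> \<rho> y = 0"
    and Y_bdry: "polyhedron Y \<or>
       (\<forall>a b. a \<noteq> 0 \<longrightarrow>
          hausdorff_measure (DIM('d) - 1) (frontier Y \<inter> {y. a \<bullet> y = b}) = 0)"
    and x_distinct: "inj_on x {..<N}"
    and p_pos: "\<And>i. i < N \<Longrightarrow> p i > 0"
    and p_sum: "(\<Sum>i<N. p i) = 1"
    and opt: "\<And>z. dual_obj N x p R z \<le> dual_obj N x p R zs"
  shows "\<forall>i<N. \<forall>j<N. i \<noteq> j \<longrightarrow> (\<forall>h1 h2 :: nat \<Rightarrow> real.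
           (\<forall>t>0. cell N x (\<lambda>k. zs k + t * h1 k) i \<inter> cell N x (\<lambda>k. zs k + t * h2 k) j
                    \<subseteq> Dset N x zs i j h1 h2 t)
         \<and> (\<lambda>t. measure R (Dset N x zs i j h1 h2 t - cell N x (\<lambda>k. zs k + t * h2 k) j))
             \<in> O[at_right 0](\<lambda>t. t\<^sup>2))"
proof (intro allI impI conjI)
  fix i j :: nat and h1 h2 :: "nat \<Rightarrow> real" and t :: real
  assume "i < N" "i \<noteq> j"
  then show "cell N x (\<lambda>k. zs k + t * h1 k) i \<inter> cell N x (\<lambda>k. zs k + t * h2 k) j
      \<subseteq> Dset N x zs i j h1 h2 t"
    by (rule cell_Int_cell_subset_Dset)
next
  fix i j :: nat and h1 h2 :: "nat \<Rightarrow> real"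
  assume ij: "i < N" "j < N" "i \<noteq> j"
  interpret prob_space R
    by (rule R_prob)
  have sets_R: "sets R = sets borel"
    by (simp add: R_def)
  have "AE y in R. y \<in> Y"
    unfolding R_def using rho_meas rho_zero by (subst AE_density) (auto intro!: AE_I2 intro: ccontr)
  then have integrable: "\<And>z. integrable R (\<lambda>y. Min ((\<lambda>l. (norm (y - x l))\<^sup>2 / 2 - z l) ` {..<N}))"
    using integrable_dual_integrand[OF finite_measure_axioms sets_R _ compact_imp_bounded[OF Y_compact]] ij
    by simp
  show "(\<lambda>t. measure R (Dset N x zs i j h1 h2 t - cell N x (\<lambda>k. zs k + t * h2 k) j))
      \<in> O[at_right 0](\<lambda>t. t\<^sup>2)"
    using finite_measure_axioms sets_R ij x_distinct
  proof (rule measure_Dset_diff_cell_bigo)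
    show "\<not> cell N x zs m \<subseteq> {y. a \<bullet> y = \<beta>}" if "m < N" "a \<noteq> 0" for m a \<beta>
      using that p_pos measure_density_hyperplane[OF rho_meas]
      by (intro optimal_cell_not_in_hyperplane[OF finite_measure_axioms sets_R integrable opt]) (auto simp: R_def)
    show "(\<lambda>t. measure R (slab_pair a \<alpha> b \<beta> (c * t))) \<in> O[at_right 0](\<lambda>t. t\<^sup>2)"
      if "a \<noteq> 0" "\<forall>\<mu>. b \<noteq> \<mu> *\<^sub>R a" "0 \<le> c" for a \<alpha> b \<beta> c
      unfolding R_def using rho_meas rho_cont rho_zero Y_compact that
      by (rule measure_density_slab_pair_bigo)
  qed
qed

end
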